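(* Let $0\le m\le n$. Every adjacency-preserving (resp. adjacency-preserving one-to-one) map $f:[m]\to[n]$ factors uniquely as a composite $[m]\xrightarrow{\psi}[m]\xrightarrow{\phi}[n]$ with $\phi\in\square$ and $\psi$ adjacency-preserving (resp. adjacency-preserving one-to-one).
   Context: $[0]=\{()\}$, $[n]=\{0,1\}^n$ ($n\ge1$) with the product order. Face maps $\delta_i^\alpha:[n-1]\to[n]$ insert $\alpha\in\{0,1\}$ at position $i$; $\square$ is the category with objects $[n]$, $n\ge0$, generated by the face maps (under composition of set maps). With $d(\epsilon,\epsilon')=\sum_i|\epsilon_i-\epsilon'_i|$, a map $f:[m]\to[n]$ is adjacency-preserving if it is strictly increasing and $d(x,y)=1$ implies $d(f(x),f(y))=1$. *)

theory Defs
  imports Main "HOL-Library.FuncSet"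
begin

text \<open>The cube [n] = {0,1}^n, elements are boolean lists of length n
  (False = 0, True = 1). [0] = {[]} is a one-point set.\<close>
definition cube :: "nat \<Rightarrow> bool list set" where
  "cube n = {x. length x = n}"

definition cube_le :: "bool list \<Rightarrow> bool list \<Rightarrow> bool" where
  "cube_le x y = list_all2 (\<le>) x y"

definition cube_lt :: "bool list \<Rightarrow> bool list \<Rightarrow> bool" where
  "cube_lt x y = (cube_le x y \<and> x \<noteq> y)"

definition cube_dist :: "bool list \<Rightarrow> bool list \<Rightarrow> nat" where
  "cube_dist x y = card {i. i < length x \<and> x ! i \<noteq> y ! i}"

text \<open>Maps [m] -> [n] are extensional functions in the PiE set from cube m to cube n.
  Adjacency-preserving: strictly increasing and d(x,y)=1 implies d(f x,f y)=1.\<close>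
definition adj_pres :: "nat \<Rightarrow> (bool list \<Rightarrow> bool list) \<Rightarrow> bool" where
  "adj_pres m f =
     ((\<forall>x\<in>cube m. \<forall>y\<in>cube m. cube_lt x y \<longrightarrow> cube_lt (f x) (f y)) \<and>
      (\<forall>x\<in>cube m. \<forall>y\<in>cube m. cube_dist x y = 1 \<longrightarrow> cube_dist (f x) (f y) = 1))"

text \<open>Face map delta_i^alpha : [n] -> [n+1] inserting alpha at (0-based) position i, i \<le> n.\<close>
definition face :: "nat \<Rightarrow> nat \<Rightarrow> bool \<Rightarrow> bool list \<Rightarrow> bool list" where
  "face n i a = restrict (\<lambda>x. take i x @ a # drop i x) (cube n)"

inductive box_mor_p :: "nat \<Rightarrow> nat \<Rightarrow> (bool list \<Rightarrow> bool list) \<Rightarrow> bool" for m where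
  box_id: "box_mor_p m m (restrict id (cube m))"
| box_face: "\<lbrakk>box_mor_p m n \<phi>; i \<le> n\<rbrakk> \<Longrightarrow> box_mor_p m (Suc n) (compose (cube m) (face n i a) \<phi>)"

definition box_mor :: "nat \<Rightarrow> nat \<Rightarrow> (bool list \<Rightarrow> bool list) set" where
  "box_mor m n = {\<phi>. box_mor_p m n \<phi>}"

end

theory Submission
  imports Defs
begin

(*
  A morphism of the cube category [m] \<rightarrow> [n] is determined by a word in {0,1,*}^n with m stars:
  it fills the stars with the coordinates of its argument. An adjacency-preserving f sends the
  chain 0\<dots>0 < 10\<dots>0 < \<dots> < 1\<dots>1 of m covering steps to such a chain, so f(0\<dots>0) \<le> f(1\<dots>1)
  at distance m. Every f(x) lies between these two points and so agrees with them wherever they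
  agree; putting stars where they differ gives a face map \<phi> with f = \<phi> \<circ> \<psi>, and \<psi> inherits
  adjacency preservation from f because \<phi> is an order and distance embedding.
  Conversely, in any factorization the m stars of \<phi> must contain, hence be, the m coordinates
  where f(0\<dots>0) and f(1\<dots>1) differ, and \<phi> is injective, so \<psi> is determined as well.
*)

lemma cube_dist_conv_filter:
  "cube_dist x y = length (filter (\<lambda>i. x ! i \<noteq> y ! i) [0..<length x])"
  unfolding cube_dist_def length_filter_conv_card by (intro arg_cong[where f=card]) auto

lemma cube_dist_Cons [simp]:
  "cube_dist (a # x) (b # y) = (if a = b then 0 else 1) + cube_dist x y"
  by (simp add: cube_dist_conv_filter upt_conv_Cons map_Suc_upt[symmetric] filter_map o_def
      del: upt_Suc)

lemma cube_dist_self [simp]: "cube_dist x x = 0"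
  by (simp add: cube_dist_def)

lemma cube_dist_append:
  "length a = length c \<Longrightarrow> cube_dist (a @ b) (c @ d) = cube_dist a c + cube_dist b d"
  by (induction a c rule: list_induct2) auto

lemma cube_dist_le_length: "cube_dist x y \<le> length x"
  unfolding cube_dist_def by (rule card_mono[where B="{..<length x}", simplified]) auto

lemma cube_le_Cons [simp]: "cube_le (a # x) (b # y) \<longleftrightarrow> a \<le> b \<and> cube_le x y"
  by (simp add: cube_le_def)

lemma cube_le_refl: "cube_le x x"
  by (simp add: cube_le_def list_all2_refl)

lemma cube_le_trans: "cube_le x y \<Longrightarrow> cube_le y z \<Longrightarrow> cube_le x z"
  unfolding cube_le_def by (rule list_all2_trans[OF order_trans])

lemma count_True_cube_le:
  "cube_le u v \<Longrightarrow> count_list v True = count_list u True + cube_dist u v"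
  unfolding cube_le_def by (induction rule: list_all2_induct) auto

lemma adj_pres_mono:
  assumes "adj_pres m f" "x \<in> cube m" "y \<in> cube m" "cube_le x y"
  shows "cube_le (f x) (f y)"
proof (cases "x = y")
  case True
  then show ?thesis by (simp add: cube_le_refl)
next
  case False
  then show ?thesis
    using assms unfolding adj_pres_def cube_lt_def by blast
qed

lemma adj_pres_corners:
  assumes f: "adj_pres m f"
  shows "cube_le (f (replicate m False)) (f (replicate m True))
       \<and> cube_dist (f (replicate m False)) (f (replicate m True)) = m"
proof -
  define x where "x k = replicate k True @ replicate (m - k) False" for k
  have x_step: "x k \<in> cube m \<and> x (Suc k) \<in> cube m
      \<and> cube_lt (x k) (x (Suc k)) \<and> cube_dist (x k) (x (Suc k)) = 1" if "k < m" for k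
  proof -
    define r where "r = replicate (m - Suc k) False"
    have "x k = replicate k True @ False # r" "x (Suc k) = replicate k True @ True # r"
      using that by (simp_all add: x_def r_def Suc_diff_Suc[symmetric] replicate_app_Cons_same)
    moreover have "length r = m - Suc k"
      by (simp add: r_def)
    ultimately show ?thesis
      using that by (simp add: cube_def cube_lt_def cube_le_def cube_dist_append
          list_all2_appendI list_all2_refl)
  qed
  have "cube_le (f (x 0)) (f (x k)) \<and> count_list (f (x k)) True = count_list (f (x 0)) True + k"
    if "k \<le> m" for k
    using that
  proof (induction k)
    case 0
    then show ?case by (simp add: cube_le_refl)
  next
    case (Suc k)
    then have "cube_lt (f (x k)) (f (x (Suc k)))" "cube_dist (f (x k)) (f (x (Suc k))) = 1"
      using f x_step[of k] unfolding adj_pres_def by auto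
    then show ?case
      using Suc count_True_cube_le[of "f (x k)" "f (x (Suc k))"]
      by (auto simp: cube_lt_def intro: cube_le_trans)
  qed
  from this[of m] show ?thesis
    using count_True_cube_le[of "f (x 0)" "f (x m)"] by (simp add: x_def)
qed

(* Patterns encode words in {0,1,*}: None is a star, to be filled by the next free coordinate. *)
fun fill :: "bool option list \<Rightarrow> bool list \<Rightarrow> bool list" where
  "fill [] xs = []"
| "fill (Some b # p) xs = b # fill p xs"
| "fill (None # p) [] = []"
| "fill (None # p) (x # xs) = x # fill p xs"

fun unfill :: "bool option list \<Rightarrow> bool list \<Rightarrow> bool list" where
  "unfill (None # p) (y # ys) = y # unfill p ys"
| "unfill (Some b # p) (y # ys) = unfill p ys"
| "unfill _ _ = []"

definition matches :: "bool option list \<Rightarrow> bool list \<Rightarrow> bool" where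
  "matches p y = list_all2 (\<lambda>r c. r = None \<or> r = Some c) p y"

definition pattern :: "bool list \<Rightarrow> bool list \<Rightarrow> bool option list" where
  "pattern u v = map2 (\<lambda>a b. if a = b then Some a else None) u v"

lemma length_fill: "length x = count_list p None \<Longrightarrow> length (fill p x) = length p"
  by (induction p x rule: fill.induct) auto

lemma fill_replicate_None: "fill (replicate (length x) None) x = x"
  by (induction x) auto

lemma fill_insert_Some:
  "length x = count_list p None \<Longrightarrow> i \<le> length p \<Longrightarrow>
   take i (fill p x) @ a # drop i (fill p x) = fill (take i p @ Some a # drop i p) x"
proof (induction p x arbitrary: i rule: fill.induct)
  case (2 b p xs)
  then show ?case by (cases i) auto
next
  case (4 p y ys)
  then show ?case by (cases i) auto
qed auto

lemma unfill_fill: "length x = count_list p None \<Longrightarrow> unfill p (fill p x) = x"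
  by (induction p x rule: fill.induct) auto

lemma fill_unfill:
  "matches p y \<Longrightarrow> length (unfill p y) = count_list p None \<and> fill p (unfill p y) = y"
  unfolding matches_def by (induction rule: list_all2_induct) auto

lemma cube_le_fill:
  "length u = count_list p None \<Longrightarrow> length v = count_list p None \<Longrightarrow>
   cube_le (fill p u) (fill p v) \<longleftrightarrow> cube_le u v"
proof (induction p arbitrary: u v)
  case (Cons r p)
  then show ?case by (cases r; cases u; cases v) auto
qed simp

lemma cube_dist_fill:
  "length u = count_list p None \<Longrightarrow> length v = count_list p None \<Longrightarrow>
   cube_dist (fill p u) (fill p v) = cube_dist u v"
proof (induction p arbitrary: u v)
  case (Cons r p)
  then show ?case by (cases r; cases u; cases v) auto
qed simp

lemma count_None_pattern:
  "length u = length v \<Longrightarrow> count_list (pattern u v) None = cube_dist u v"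
  by (induction u v rule: list_induct2) (auto simp: pattern_def)

lemma pattern_fill:
  "length u = count_list p None \<Longrightarrow> length v = count_list p None \<Longrightarrow>
   cube_dist (fill p u) (fill p v) = count_list p None \<Longrightarrow> pattern (fill p u) (fill p v) = p"
proof (induction p arbitrary: u v)
  case Nil
  then show ?case by (simp add: pattern_def)
next
  case (Cons r p)
  show ?case
  proof (cases r)
    case None
    then obtain a b u' v' where "u = a # u'" "v = b # v'"
      using Cons.prems by (auto simp: length_Suc_conv)
    moreover have "cube_dist u' v' \<le> count_list p None"
      using Cons.prems cube_dist_le_length[of u' v'] \<open>u = a # u'\<close> None by simp
    ultimately show ?thesis
      using Cons None cube_dist_fill[of u' p v'] by (auto simp: pattern_def split: if_splits)
  next
    case (Some b)
    then show ?thesis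
      using Cons by (simp add: pattern_def)
  qed
qed

lemma matches_pattern: "cube_le u y \<Longrightarrow> cube_le y v \<Longrightarrow> matches (pattern u v) y"
  unfolding cube_le_def pattern_def matches_def
  by (induction u y arbitrary: v rule: list_all2_induct) (auto simp: list_all2_Cons1)

lemma count_list_replicate_same [simp]: "count_list (replicate n x) x = n"
  by (induction n) auto

lemma restrict_fill_replicate_None:
  "restrict (fill (replicate m None)) (cube m) = restrict id (cube m)"
  by (rule restrict_ext) (metis cube_def fill_replicate_None id_apply mem_Collect_eq)

lemma compose_face_fill:
  assumes "length p = n" "count_list p None = m" "i \<le> n"
  shows "compose (cube m) (face n i a) (restrict (fill p) (cube m)) =
         restrict (fill (take i p @ Some a # drop i p)) (cube m)"
  unfolding compose_def
proof (rule restrict_ext)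
  fix x assume "x \<in> cube m"
  then have "length x = count_list p None" "fill p x \<in> cube n"
    using assms length_fill[of x p] by (simp_all add: cube_def)
  then show "face n i a (restrict (fill p) (cube m) x) = fill (take i p @ Some a # drop i p) x"
    using \<open>x \<in> cube m\<close> fill_insert_Some assms by (simp add: face_def)
qed

lemma box_mor_p_imp_fill:
  "box_mor_p m n \<phi> \<Longrightarrow>
   \<exists>p. length p = n \<and> count_list p None = m \<and> \<phi> = restrict (fill p) (cube m)"
proof (induction rule: box_mor_p.induct)
  case box_id
  then show ?case
    using restrict_fill_replicate_None by (metis length_replicate count_list_replicate_same)
next
  case (box_face n \<phi> i a)
  then obtain p where p: "length p = n" "count_list p None = m" "\<phi> = restrict (fill p) (cube m)"
    by blast
  have "count_list (take i p @ Some a # drop i p) None = m"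
    using p(2) by (metis append_take_drop_id count_list_append count_list.simps(2) option.distinct(1))
  then show ?case
    using compose_face_fill[OF p(1,2) box_face(2)] p box_face(2)
    by (intro exI[of _ "take i p @ Some a # drop i p"]) auto
qed

lemma box_mor_p_fill:
  "length p = n \<Longrightarrow> count_list p None = m \<Longrightarrow> box_mor_p m n (restrict (fill p) (cube m))"
proof (induction n arbitrary: p)
  case 0
  then have "m = 0" "p = replicate m None"
    by simp_all
  then show ?case
    using box_mor_p.box_id[of m] restrict_fill_replicate_None[of m] by metis
next
  case (Suc n)
  show ?case
  proof (cases "Some True \<in> set p \<or> Some False \<in> set p")
    case True
    then obtain a pre post where p: "p = pre @ Some a # post"
      by (metis split_list)
    define q where "q = pre @ post"
    have q: "length q = n" "count_list q None = m" "length pre \<le> n"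
      using Suc.prems by (auto simp: p q_def)
    have "p = take (length pre) q @ Some a # drop (length pre) q"
      by (simp add: p q_def)
    then show ?thesis
      using box_mor_p.box_face[OF Suc.IH[OF q(1,2)] q(3)] compose_face_fill[OF q] by metis
  next
    case False
    then have "p = replicate (Suc n) None"
      using Suc.prems(1) by (metis (full_types) option.exhaust replicate_length_same)
    moreover have "m = Suc n"
      using Suc.prems(2) calculation by simp
    ultimately show ?thesis
      using box_mor_p.box_id[of m] restrict_fill_replicate_None[of m] by metis
  qed
qed

lemma box_mor_iff_fill:
  "\<phi> \<in> box_mor m n \<longleftrightarrow>
   (\<exists>p. length p = n \<and> count_list p None = m \<and> \<phi> = restrict (fill p) (cube m))"
  using box_mor_p_imp_fill box_mor_p_fill unfolding box_mor_def by blast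

definition corner_pattern :: "nat \<Rightarrow> (bool list \<Rightarrow> bool list) \<Rightarrow> bool option list" where
  "corner_pattern m f = pattern (f (replicate m False)) (f (replicate m True))"

lemma count_None_corner_pattern:
  assumes "adj_pres m f"
  shows "count_list (corner_pattern m f) None = m"
proof -
  have "length (f (replicate m False)) = length (f (replicate m True))"
    using adj_pres_corners[OF assms] unfolding cube_le_def by (blast dest: list_all2_lengthD)
  then show ?thesis
    using adj_pres_corners[OF assms] by (simp add: corner_pattern_def count_None_pattern)
qed

lemma fill_unfill_corner_pattern:
  assumes f: "adj_pres m f" and x: "x \<in> cube m"
  shows "length (unfill (corner_pattern m f) (f x)) = m
       \<and> fill (corner_pattern m f) (unfill (corner_pattern m f) (f x)) = f x"
proof -
  have corners: "replicate m False \<in> cube m" "replicate m True \<in> cube m"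
    by (simp_all add: cube_def)
  have "cube_le (replicate m False) x" "cube_le x (replicate m True)"
    using x by (simp_all add: cube_def cube_le_def list_all2_conv_all_nth)
  then have "cube_le (f (replicate m False)) (f x)" "cube_le (f x) (f (replicate m True))"
    using adj_pres_mono[OF f] corners x by blast+
  then have "matches (corner_pattern m f) (f x)"
    unfolding corner_pattern_def by (rule matches_pattern)
  then show ?thesis
    using fill_unfill count_None_corner_pattern[OF f] by simp
qed

lemma adj_pres_fill_cancel:
  assumes f: "adj_pres m f"
    and g: "\<And>x. x \<in> cube m \<Longrightarrow> length (g x) = count_list p None \<and> f x = fill p (g x)"
  shows "adj_pres m g"
  unfolding adj_pres_def
proof (intro conjI ballI impI)
  fix x y assume x: "x \<in> cube m" and y: "y \<in> cube m"
  show "cube_lt (g x) (g y)" if "cube_lt x y"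
  proof -
    have "cube_lt (f x) (f y)"
      using f x y that unfolding adj_pres_def by blast
    then show ?thesis
      using g[OF x] g[OF y] by (auto simp: cube_lt_def cube_le_fill)
  qed
  show "cube_dist (g x) (g y) = 1" if "cube_dist x y = 1"
  proof -
    have "cube_dist (f x) (f y) = 1"
      using f x y that unfolding adj_pres_def by blast
    then show ?thesis
      using g[OF x] g[OF y] by (simp add: cube_dist_fill)
  qed
qed

lemma box_factorization_exists:
  assumes f: "f \<in> cube m \<rightarrow>\<^sub>E cube n" "adj_pres m f"
  defines "\<phi> \<equiv> restrict (fill (corner_pattern m f)) (cube m)"
    and "\<psi> \<equiv> restrict (\<lambda>x. unfill (corner_pattern m f) (f x)) (cube m)"
  shows "\<phi> \<in> box_mor m n" and "\<psi> \<in> cube m \<rightarrow>\<^sub>E cube m" and "adj_pres m \<psi>"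
    and "f = compose (cube m) \<phi> \<psi>"
proof -
  define P where "P = corner_pattern m f"
  note \<phi>_def = \<phi>_def[folded P_def] and \<psi>_def = \<psi>_def[folded P_def]
  have fill_unfill_P: "length (unfill P (f x)) = m \<and> fill P (unfill P (f x)) = f x"
    if "x \<in> cube m" for x
    using fill_unfill_corner_pattern[OF f(2) that] by (simp add: P_def)
  have count_P: "count_list P None = m"
    using count_None_corner_pattern[OF f(2)] by (simp add: P_def)
  have "f (replicate m False) \<in> cube n" "f (replicate m True) \<in> cube n"
    using PiE_mem[OF f(1)] by (simp_all add: cube_def)
  then have "length P = n"
    by (simp add: P_def corner_pattern_def pattern_def cube_def)
  then show "\<phi> \<in> box_mor m n"
    using count_P by (auto simp: box_mor_iff_fill \<phi>_def)
  show "\<psi> \<in> cube m \<rightarrow>\<^sub>E cube m"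
    using fill_unfill_P by (simp add: \<psi>_def cube_def)
  show "adj_pres m \<psi>"
    by (rule adj_pres_fill_cancel[OF f(2), of _ P]) (use fill_unfill_P count_P in \<open>simp add: \<psi>_def\<close>)
  show "f = compose (cube m) \<phi> \<psi>"
  proof
    fix x
    show "f x = compose (cube m) \<phi> \<psi> x"
    proof (cases "x \<in> cube m")
      case True
      then show ?thesis
        using fill_unfill_P[OF True] by (simp add: compose_def cube_def \<phi>_def \<psi>_def)
    next
      case False
      then show ?thesis
        using PiE_arb[OF f(1) False] by (simp add: compose_def)
    qed
  qed
qed

lemma box_factorization_unique:
  assumes dist: "cube_dist (f (replicate m False)) (f (replicate m True)) = m"
    and \<phi>: "\<phi> \<in> box_mor m n" and \<psi>: "\<psi> \<in> cube m \<rightarrow>\<^sub>E cube m"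
    and f: "f = compose (cube m) \<phi> \<psi>"
  defines "P \<equiv> corner_pattern m f"
  shows "\<phi> = restrict (fill P) (cube m) \<and> \<psi> = restrict (\<lambda>x. unfill P (f x)) (cube m)"
proof -
  obtain p where p: "length p = n" "count_list p None = m" "\<phi> = restrict (fill p) (cube m)"
    using \<phi> by (auto simp: box_mor_iff_fill)
  have len_\<psi>: "length (\<psi> x) = count_list p None" if "x \<in> cube m" for x
    using \<psi> that p(2) by (auto simp: cube_def)
  have f_fill: "f x = fill p (\<psi> x)" if "x \<in> cube m" for x
    using \<psi> that by (auto simp: f p(3) compose_def)
  have corners: "replicate m False \<in> cube m" "replicate m True \<in> cube m"
    by (simp_all add: cube_def)
  have "P = p"
    using pattern_fill[OF len_\<psi>[OF corners(1)] len_\<psi>[OF corners(2)]] dist p(2)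
    by (simp add: P_def corner_pattern_def f_fill[OF corners(1)] f_fill[OF corners(2)])
  moreover have "\<psi> = restrict (\<lambda>x. unfill p (f x)) (cube m)"
  proof
    fix x
    show "\<psi> x = restrict (\<lambda>x. unfill p (f x)) (cube m) x"
      using PiE_arb[OF \<psi>, of x] unfill_fill[OF len_\<psi>] f_fill by auto
  qed
  ultimately show ?thesis
    using p(3) by simp
qed

theorem proposition7p14:
  fixes m n :: nat and f :: "bool list \<Rightarrow> bool list"
  assumes "m \<le> n"
    and "f \<in> cube m \<rightarrow>\<^sub>E cube n"
    and "adj_pres m f"
  shows "(\<exists>!p. fst p \<in> box_mor m n \<and> snd p \<in> cube m \<rightarrow>\<^sub>E cube m \<and> adj_pres m (snd p)
               \<and> f = compose (cube m) (fst p) (snd p))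
       \<and> (inj_on f (cube m) \<longrightarrow>
           (\<exists>!p. fst p \<in> box_mor m n \<and> snd p \<in> cube m \<rightarrow>\<^sub>E cube m \<and> adj_pres m (snd p)
                 \<and> inj_on (snd p) (cube m) \<and> f = compose (cube m) (fst p) (snd p)))"
proof -
  define \<phi> where "\<phi> = restrict (fill (corner_pattern m f)) (cube m)"
  define \<psi> where "\<psi> = restrict (\<lambda>x. unfill (corner_pattern m f) (f x)) (cube m)"
  note exists = box_factorization_exists[OF assms(2,3), folded \<phi>_def \<psi>_def]
  have unique: "q = (\<phi>, \<psi>)"
    if "fst q \<in> box_mor m n" "snd q \<in> cube m \<rightarrow>\<^sub>E cube m"
      and "f = compose (cube m) (fst q) (snd q)" for q
    using box_factorization_unique[OF conjunct2[OF adj_pres_corners[OF assms(3)]] that]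
    by (simp add: prod_eq_iff \<phi>_def \<psi>_def)
  have "inj_on \<psi> (cube m)" if "inj_on f (cube m)"
    using that exists(4) by (auto simp: inj_on_def compose_def)
  then show ?thesis
    using exists unique by (intro conjI impI ex1I[of _ "(\<phi>, \<psi>)"]) auto
qed

end
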